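(* Let $z\in\mathbb{R}^n$, $\lambda_1,\lambda_2>0$, $l\le 0\le u$ in $\mathbb{R}^n$, and for $i\in[n]$ let $\omega_i(\alpha)=\lambda_2|\alpha|_0+\delta_{[l_i,u_i]}(\alpha)$ for $\alpha\in\mathbb{R}$. Set $H(0)=-\lambda_1$ and, for $s\in[n]$, $$h_s(y;z_{1:s})=\tfrac12\|y-z_{1:s}\|^2+\lambda_1\sum_{j=1}^{s-1}|y_j-y_{j+1}|_0+\sum_{j=1}^s\omega_j(y_j)\ (y\in\mathbb{R}^s),\qquad H(s)=\min_{y\in\mathbb{R}^s}h_s(y;z_{1:s}),$$ and define $P_s:[0\!:\!s-1]\times\mathbb{R}\to(-\infty,+\infty]$ by $$P_s(i,\alpha)=H(i)+\tfrac12\|\alpha\mathbf{1}-z_{i+1:s}\|^2+\sum_{j=i+1}^s\omega_j(\alpha)+\lambda_1.$$ Fix any $s\in[n]$. Then: (i) $H(s)=\min_{i\in[0:s-1],\ \alpha\in\mathbb{R}}P_s(i,\alpha)$; (ii) if $(i_s^*,\alpha_s^* )\in\arg\min_{i\in[0:s-1],\alpha\in\mathbb{R}}P_s(i,\alpha)$, then $y^*=(y^*_{1:i_s^*};\alpha_s^*\mathbf{1})$ is a global minimizer of $\min_{y\in\mathbb{R}^s}h_s(y;z_{1:s})$, where $y^*_{1:i_s^*}\in\arg\min_{v\in\mathbb{R}^{i_s^*}}h_{i_s^*}(v;z_{1:i_s^*})$ (when $i_s^*=0$, $y^*=\alpha_s^*\mathbf{1}$).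
   Context: $|t|_0=0$ if $t=0$ and $1$ otherwise; $\delta_{[a,b]}$ is the indicator of the interval $[a,b]$. $[n]=\{1,\dots,n\}$, $[j\!:\!k]=\{j,\dots,k\}$, $z_{j:k}=(z_j,\dots,z_k)$, and $\mathbf{1}$ is the all-ones vector of the appropriate dimension. In this context $\sum_{j=1}^{s-1}|y_j-y_{j+1}|_0$ is $\|\widehat{B}y\|_0$ for the fused difference operator $\widehat B y=(y_1-y_2,\dots,y_{s-1}-y_s)$, so $H(n)$ is the optimal value of $\min_x \frac12\|x-z\|^2+\lambda_1\|\widehat Bx\|_0+\lambda_2\|x\|_0+\delta_{\{l\le x\le u\}}(x)$. *)

theory Defs
  imports "HOL-Analysis.Analysis" "HOL-Library.Extended_Real"
begin

(* Vectors in R^n / R^s are functions nat => real, indexed from 1. *)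

definition l0norm :: "real \<Rightarrow> real" where
  "l0norm t = (if t = 0 then 0 else 1)"

definition omega :: "(nat \<Rightarrow> real) \<Rightarrow> (nat \<Rightarrow> real) \<Rightarrow> real \<Rightarrow> nat \<Rightarrow> real \<Rightarrow> ereal" where
  "omega l u lam2 i a = (if l i \<le> a \<and> a \<le> u i then ereal (lam2 * l0norm a) else \<infinity>)"

definition hfun :: "(nat \<Rightarrow> real) \<Rightarrow> (nat \<Rightarrow> real) \<Rightarrow> (nat \<Rightarrow> real) \<Rightarrow> real \<Rightarrow> real
                    \<Rightarrow> nat \<Rightarrow> (nat \<Rightarrow> real) \<Rightarrow> ereal" where
  "hfun z l u lam1 lam2 s y =
     ereal (1/2 * (\<Sum>j=1..s. (y j - z j)^2) + lam1 * (\<Sum>j=1..s-1. l0norm (y j - y (j+1))))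
     + (\<Sum>j=1..s. omega l u lam2 j (y j))"

(* H(0) = -lambda1, H(s) = min_{y in R^s} h_s(y) (written as an infimum; attainment is part of the claims) *)
definition Hval :: "(nat \<Rightarrow> real) \<Rightarrow> (nat \<Rightarrow> real) \<Rightarrow> (nat \<Rightarrow> real) \<Rightarrow> real \<Rightarrow> real \<Rightarrow> nat \<Rightarrow> ereal" where
  "Hval z l u lam1 lam2 s =
     (if s = 0 then ereal (- lam1) else (INF y. hfun z l u lam1 lam2 s y))"

definition Pfun :: "(nat \<Rightarrow> real) \<Rightarrow> (nat \<Rightarrow> real) \<Rightarrow> (nat \<Rightarrow> real) \<Rightarrow> real \<Rightarrow> real
                    \<Rightarrow> nat \<Rightarrow> nat \<Rightarrow> real \<Rightarrow> ereal" where
  "Pfun z l u lam1 lam2 s i a =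
     Hval z l u lam1 lam2 i + ereal (1/2 * (\<Sum>j=i+1..s. (a - z j)^2))
     + (\<Sum>j=i+1..s. omega l u lam2 j a) + ereal lam1"

end

(*
  Dynamic programming over the last jump.  For y in R^s let i < s be the last index with
  y_i ~= y_(i+1), or i = 0 if y is constant.  Then y equals y_s on [i+1..s], and h_s(y) splits
  into h_i(y_(1:i)) + lambda1 + (cost of the constant block y_s on [i+1..s]), which is at least
  P_s(i, y_s).  Conversely, a minimiser of h_i followed by a constant block alpha costs at most
  P_s(i, alpha), because the jump penalty is at most lambda1.

  All minima exist, by strong induction on s: for fixed i the block cost is a continuous
  quadratic on the compact set of feasible alpha plus the constant lambda2 (s - i) for alpha ~= 0,
  so it is minimised either at 0 or at the minimiser of the quadratic.
*)

theory Submission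
  imports Defs
begin

definition segment_cost :: "(nat \<Rightarrow> real) \<Rightarrow> (nat \<Rightarrow> real) \<Rightarrow> (nat \<Rightarrow> real) \<Rightarrow> real
                            \<Rightarrow> nat \<Rightarrow> nat \<Rightarrow> real \<Rightarrow> ereal" where
  "segment_cost z l u lam2 i s a =
     ereal (1/2 * (\<Sum>j=i+1..s. (a - z j)^2)) + (\<Sum>j=i+1..s. omega l u lam2 j a)"

lemma sum_split_at:
  fixes f :: "nat \<Rightarrow> 'a::comm_monoid_add"
  assumes "m \<le> i + 1" "i \<le> s"
  shows "sum f {m..s} = sum f {m..i} + sum f {i+1..s}"
  using sum.ub_add_nat[of m i f "s - i"] assms by simp

lemma eq_last_if_no_jump:
  assumes "\<forall>k\<in>{j..<s}. y k = y (Suc k)" "j \<le> s"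
  shows "y j = y s"
  using assms(2) by (induction rule: inc_induct) (use assms(1) in auto)

lemma obtain_last_jump:
  fixes y :: "nat \<Rightarrow> 'a"
  assumes "0 < s"
  obtains i where "i < s" "i = 0 \<or> (1 \<le> i \<and> y i \<noteq> y s)" "\<forall>j\<in>{i+1..s}. y j = y s"
proof -
  define J where "J = {j. 1 \<le> j \<and> j < s \<and> y j \<noteq> y (Suc j)}"
  define i where "i = Max (insert 0 J)"
  have fin: "finite (insert 0 J)" unfolding J_def by auto
  have "i \<in> insert 0 J" unfolding i_def using fin by (rule Max_in) simp
  then have i_lt: "i < s" and jump: "i = 0 \<or> (1 \<le> i \<and> y i \<noteq> y (Suc i))"
    using assms by (auto simp: J_def)
  have "y k = y (Suc k)" if "k \<in> {i+1..<s}" for k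
  proof (rule ccontr)
    assume "y k \<noteq> y (Suc k)"
    then have "k \<le> i" using that Max_ge[OF fin] unfolding i_def J_def by simp
    then show False using that by simp
  qed
  then have tail: "\<forall>j\<in>{i+1..s}. y j = y s"
    by (auto intro: eq_last_if_no_jump[where s = s])
  have "y (Suc i) = y s"
    using tail[rule_format, of "Suc i"] i_lt by simp
  with jump have "i = 0 \<or> (1 \<le> i \<and> y i \<noteq> y s)"
    by simp
  then show thesis
    using i_lt tail by (intro that)
qed

lemma obtain_min_over_finite_family:
  fixes f :: "'i \<Rightarrow> 'a \<Rightarrow> 'b::linorder"
  assumes "finite I" "I \<noteq> {}" "\<And>i. i \<in> I \<Longrightarrow> \<exists>a. \<forall>a'. f i a \<le> f i a'"
  obtains i a where "i \<in> I" "\<forall>i'\<in>I. \<forall>a'. f i a \<le> f i' a'"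
proof -
  obtain g where g: "\<And>i a'. i \<in> I \<Longrightarrow> f i (g i) \<le> f i a'"
    using assms(3) by metis
  define i where "i = arg_min_on (\<lambda>i. f i (g i)) I"
  have "i \<in> I"
    unfolding i_def using assms(1,2) by (rule arg_min_if_finite)
  moreover have "f i (g i) \<le> f i' a'" if "i' \<in> I" for i' a'
    using arg_min_least[OF assms(1,2) that, of "\<lambda>i. f i (g i)"] g[OF that, of a']
    unfolding i_def by (rule order_trans)
  ultimately show thesis
    using that by blast
qed

context
  fixes z l u :: "nat \<Rightarrow> real" and lam1 lam2 :: real
begin

lemma hfun_cong:
  assumes "\<And>j. j \<in> {1..i} \<Longrightarrow> y j = v j"
  shows "hfun z l u lam1 lam2 i y = hfun z l u lam1 lam2 i v"
  unfolding hfun_def using assms by (auto intro!: sum.cong arg_cong2[where f = "(+)"])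

lemma hfun_constant:
  assumes "\<And>j. j \<in> {1..s} \<Longrightarrow> y j = a"
  shows "hfun z l u lam1 lam2 s y = segment_cost z l u lam2 0 s a"
  unfolding hfun_def segment_cost_def using assms
  by (auto simp: l0norm_def intro!: sum.cong sum.neutral arg_cong2[where f = "(+)"])

lemma hfun_split:
  assumes "1 \<le> i" "i < s" "\<forall>j\<in>{i+1..s}. y j = a"
  shows "hfun z l u lam1 lam2 s y
           = hfun z l u lam1 lam2 i y + ereal (lam1 * l0norm (y i - a))
             + segment_cost z l u lam2 i s a"
proof -
  have split: "sum f {1..s} = sum f {1..i} + sum f {i+1..s}" for f :: "nat \<Rightarrow> 'b::comm_monoid_add"
    using assms by (intro sum_split_at) auto
  have squares: "(\<Sum>j=1..s. (y j - z j)^2) = (\<Sum>j=1..i. (y j - z j)^2) + (\<Sum>j=i+1..s. (a - z j)^2)"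
    unfolding split using assms by (auto intro: sum.cong)
  have jumps: "(\<Sum>j=1..s-1. l0norm (y j - y (j+1)))
                 = (\<Sum>j=1..i-1. l0norm (y j - y (j+1))) + l0norm (y i - a)"
  proof -
    have "(\<Sum>j=1..s-1. l0norm (y j - y (j+1)))
            = (\<Sum>j=1..i. l0norm (y j - y (j+1))) + (\<Sum>j=i+1..s-1. l0norm (y j - y (j+1)))"
      using assms by (intro sum_split_at) auto
    also have "(\<Sum>j=i+1..s-1. l0norm (y j - y (j+1))) = 0"
      using assms by (auto simp: l0norm_def intro!: sum.neutral)
    also have "(\<Sum>j=1..i. l0norm (y j - y (j+1)))
                 = (\<Sum>j=1..i-1. l0norm (y j - y (j+1))) + l0norm (y i - a)"
      using assms sum_split_at[of 1 "i-1" i "\<lambda>j. l0norm (y j - y (j+1))"] by simp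
    finally show ?thesis by simp
  qed
  have omegas: "(\<Sum>j=1..s. omega l u lam2 j (y j))
                  = (\<Sum>j=1..i. omega l u lam2 j (y j)) + (\<Sum>j=i+1..s. omega l u lam2 j a)"
    unfolding split using assms by (auto intro: sum.cong)
  show ?thesis
    unfolding hfun_def segment_cost_def squares jumps omegas
    by (simp add: ac_simps distrib_left add_divide_distrib flip: plus_ereal.simps(1))
qed

lemma Pfun_eq:
  "Pfun z l u lam1 lam2 s i a
     = Hval z l u lam1 lam2 i + segment_cost z l u lam2 i s a + ereal lam1"
  by (simp add: Pfun_def segment_cost_def add.assoc)

lemma Pfun_0: "Pfun z l u lam1 lam2 s 0 a = segment_cost z l u lam2 0 s a"
  by (cases "segment_cost z l u lam2 0 s a") (simp_all add: Pfun_eq Hval_def)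

lemma Hval_le_hfun: "1 \<le> i \<Longrightarrow> Hval z l u lam1 lam2 i \<le> hfun z l u lam1 lam2 i y"
  by (simp add: Hval_def INF_lower)

lemma Hval_eq_hfun_if_minimal:
  assumes "1 \<le> i" "\<forall>v'. hfun z l u lam1 lam2 i v \<le> hfun z l u lam1 lam2 i v'"
  shows "Hval z l u lam1 lam2 i = hfun z l u lam1 lam2 i v"
  using assms by (auto simp: Hval_def intro!: antisym INF_lower INF_greatest)

lemma Pfun_le_hfun:
  assumes "0 < s"
  obtains i where "i < s" "Pfun z l u lam1 lam2 s i (y s) \<le> hfun z l u lam1 lam2 s y"
proof -
  obtain i where i: "i < s" and jump: "i = 0 \<or> (1 \<le> i \<and> y i \<noteq> y s)"
    and tail: "\<forall>j\<in>{i+1..s}. y j = y s"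
    using obtain_last_jump[OF assms] .
  from jump consider "i = 0" | "1 \<le> i" "y i \<noteq> y s"
    by blast
  then have "Pfun z l u lam1 lam2 s i (y s) \<le> hfun z l u lam1 lam2 s y"
  proof cases
    case 1
    then have "hfun z l u lam1 lam2 s y = segment_cost z l u lam2 0 s (y s)"
      using tail[unfolded 1 add_0] by (intro hfun_constant) blast
    with 1 show ?thesis by (simp add: Pfun_0)
  next
    case 2
    then have split: "hfun z l u lam1 lam2 s y
                 = hfun z l u lam1 lam2 i y + ereal lam1 + segment_cost z l u lam2 i s (y s)"
      using hfun_split[OF 2(1) i(1) tail] by (simp add: l0norm_def)
    have "Pfun z l u lam1 lam2 s i (y s)
            = Hval z l u lam1 lam2 i + segment_cost z l u lam2 i s (y s) + ereal lam1"
      by (rule Pfun_eq)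
    also have "\<dots> \<le> hfun z l u lam1 lam2 i y + segment_cost z l u lam2 i s (y s) + ereal lam1"
      using Hval_le_hfun[OF 2(1)] by (intro add_right_mono)
    also have "\<dots> = hfun z l u lam1 lam2 s y"
      unfolding split by (simp add: ac_simps)
    finally show ?thesis .
  qed
  with i(1) show thesis by (rule that)
qed

lemma hfun_append_le_Pfun:
  assumes "0 \<le> lam1" "i < s"
    and v_min: "\<forall>v'. hfun z l u lam1 lam2 i v \<le> hfun z l u lam1 lam2 i v'"
  shows "hfun z l u lam1 lam2 s (\<lambda>j. if j \<le> i then v j else a) \<le> Pfun z l u lam1 lam2 s i a"
    (is "hfun z l u lam1 lam2 s ?y \<le> _")
proof (cases "i = 0")
  case True
  then have "hfun z l u lam1 lam2 s ?y = segment_cost z l u lam2 0 s a"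
    by (intro hfun_constant) auto
  with True show ?thesis by (simp add: Pfun_0)
next
  case False
  have jump_cost: "lam1 * l0norm (?y i - a) \<le> lam1"
    using assms(1) by (simp add: l0norm_def)
  have "hfun z l u lam1 lam2 s ?y
      = hfun z l u lam1 lam2 i ?y + ereal (lam1 * l0norm (?y i - a))
        + segment_cost z l u lam2 i s a"
    using False assms(2) by (intro hfun_split) auto
  also have "hfun z l u lam1 lam2 i ?y = Hval z l u lam1 lam2 i"
    using Hval_eq_hfun_if_minimal[OF _ v_min] hfun_cong[of i ?y v] False by simp
  also have "Hval z l u lam1 lam2 i + ereal (lam1 * l0norm (?y i - a))
               + segment_cost z l u lam2 i s a
      \<le> Hval z l u lam1 lam2 i + ereal lam1 + segment_cost z l u lam2 i s a"
    using jump_cost by (intro add_mono) auto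
  also have "\<dots> = Pfun z l u lam1 lam2 s i a"
    unfolding Pfun_eq by (simp add: ac_simps)
  finally show ?thesis .
qed

lemma Pfun_min_le_hfun:
  assumes "i < s"
    and P_min: "\<forall>i'<s. \<forall>a'. Pfun z l u lam1 lam2 s i a \<le> Pfun z l u lam1 lam2 s i' a'"
  shows "Pfun z l u lam1 lam2 s i a \<le> hfun z l u lam1 lam2 s y"
proof -
  obtain i' where "i' < s" "Pfun z l u lam1 lam2 s i' (y s) \<le> hfun z l u lam1 lam2 s y"
    using Pfun_le_hfun assms(1) by (metis gr_zeroI not_less_zero)
  with P_min show ?thesis
    by (meson order_trans)
qed

lemma Pfun_min_le_Hval:
  assumes "i < s" "\<forall>i'<s. \<forall>a'. Pfun z l u lam1 lam2 s i a \<le> Pfun z l u lam1 lam2 s i' a'"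
  shows "Pfun z l u lam1 lam2 s i a \<le> Hval z l u lam1 lam2 s"
  using Pfun_min_le_hfun[OF assms] assms(1) by (simp add: Hval_def INF_greatest)

lemma hfun_append_minimal:
  assumes "0 \<le> lam1" "i < s"
    and "\<forall>i'<s. \<forall>a'. Pfun z l u lam1 lam2 s i a \<le> Pfun z l u lam1 lam2 s i' a'"
    and "\<forall>v'. hfun z l u lam1 lam2 i v \<le> hfun z l u lam1 lam2 i v'"
  shows "hfun z l u lam1 lam2 s (\<lambda>j. if j \<le> i then v j else a) \<le> hfun z l u lam1 lam2 s y"
  using hfun_append_le_Pfun[OF assms(1,2,4)] Pfun_min_le_hfun[OF assms(2,3)] by (rule order_trans)

lemma segment_cost_attains_min:
  assumes "0 \<le> lam2" "i < s"
  obtains a0 where "\<And>a. segment_cost z l u lam2 i s a0 \<le> segment_cost z l u lam2 i s a"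
proof -
  define F where "F = (\<Inter>j\<in>{i+1..s}. {l j..u j})"
  define q where "q a = 1/2 * (\<Sum>j=i+1..s. (a - z j)^2)" for a
  define c where "c = real (s - i) * lam2"
  have outside: "segment_cost z l u lam2 i s a = \<infinity>" if a_out: "a \<notin> F" for a
  proof -
    obtain j where "j \<in> {i+1..s}" "omega l u lam2 j a = \<infinity>"
      using a_out by (auto simp: F_def omega_def)
    then show ?thesis
      unfolding segment_cost_def by (subst sum_Pinfty[THEN iffD2]) auto
  qed
  have inside: "segment_cost z l u lam2 i s a = ereal (q a + c * l0norm a)" if "a \<in> F" for a
  proof -
    have "(\<Sum>j=i+1..s. omega l u lam2 j a) = (\<Sum>j=i+1..s. ereal (lam2 * l0norm a))"
      using that by (intro sum.cong) (auto simp: F_def omega_def)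
    then show ?thesis
      by (simp add: segment_cost_def q_def c_def sum_ereal)
  qed
  show thesis
  proof (cases "F = {}")
    case True
    then show thesis
      using outside by (intro that) simp
  next
    case False
    have "F \<subseteq> {l s..u s}"
      using assms(2) by (auto simp: F_def)
    then have "compact F"
      unfolding compact_eq_bounded_closed F_def
      by (auto intro: bounded_subset[OF compact_imp_bounded[OF compact_Icc]])
    moreover have "continuous_on F q"
      unfolding q_def by (intro continuous_intros)
    ultimately obtain a1 where a1: "a1 \<in> F" "\<And>b. b \<in> F \<Longrightarrow> q a1 \<le> q b"
      using continuous_attains_inf[OF _ False] by metis
    define a0 where
      "a0 = (if segment_cost z l u lam2 i s 0 \<le> segment_cost z l u lam2 i s a1 then 0 else a1)"
    have a0_le: "segment_cost z l u lam2 i s a0 \<le> segment_cost z l u lam2 i s 0"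
      "segment_cost z l u lam2 i s a0 \<le> segment_cost z l u lam2 i s a1"
      by (simp_all add: a0_def not_le less_imp_le)
    show thesis
    proof (rule that)
      fix a
      consider "a \<notin> F" | "a = 0" | "a \<in> F" "a \<noteq> 0"
        by blast
      then show "segment_cost z l u lam2 i s a0 \<le> segment_cost z l u lam2 i s a"
      proof cases
        case 1
        then show ?thesis by (simp add: outside)
      next
        case 2
        then show ?thesis using a0_le(1) by simp
      next
        case 3
        have "c * l0norm a1 \<le> c * l0norm a"
          using 3(2) assms(1) by (simp add: c_def l0norm_def)
        with a1 3(1) have "segment_cost z l u lam2 i s a1 \<le> segment_cost z l u lam2 i s a"
          by (simp add: inside add_mono)
        with a0_le(2) show ?thesis
          by (rule order_trans)
      qed
    qed
  qed
qed

lemma Pfun_attains_min: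
  assumes "0 \<le> lam2" "0 < s"
  obtains i a
  where "i < s" "\<forall>i'<s. \<forall>a'. Pfun z l u lam1 lam2 s i a \<le> Pfun z l u lam1 lam2 s i' a'"
proof -
  have family: "\<exists>a. \<forall>a'. Pfun z l u lam1 lam2 s i a \<le> Pfun z l u lam1 lam2 s i a'"
    if i_lt: "i \<in> {..<s}" for i
  proof -
    obtain a where a_min: "\<And>a'. segment_cost z l u lam2 i s a \<le> segment_cost z l u lam2 i s a'"
      using segment_cost_attains_min[OF assms(1)] i_lt by blast
    have "Pfun z l u lam1 lam2 s i a \<le> Pfun z l u lam1 lam2 s i a'" for a'
      unfolding Pfun_eq by (intro add_right_mono add_left_mono a_min)
    then show ?thesis
      by blast
  qed
  have nonempty: "{..<s} \<noteq> {}"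
    using assms(2) by auto
  obtain i a where i: "i \<in> {..<s}"
    and min: "\<forall>i'\<in>{..<s}. \<forall>a'. Pfun z l u lam1 lam2 s i a \<le> Pfun z l u lam1 lam2 s i' a'"
    using obtain_min_over_finite_family[of "{..<s}" "Pfun z l u lam1 lam2 s",
                                        OF finite_lessThan nonempty family] .
  show thesis
    using i min by (intro that) auto
qed

lemma hfun_attains_min:
  assumes "0 \<le> lam1" "0 \<le> lam2"
  shows "\<exists>v. \<forall>v'. hfun z l u lam1 lam2 s v \<le> hfun z l u lam1 lam2 s v'"
proof (induction s rule: less_induct)
  case (less s)
  show ?case
  proof (cases "s = 0")
    case True
    then show ?thesis by (simp add: hfun_def)
  next
    case False
    then obtain i a where i: "i < s"
      and P_min: "\<forall>i'<s. \<forall>a'. Pfun z l u lam1 lam2 s i a \<le> Pfun z l u lam1 lam2 s i' a'"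
      using Pfun_attains_min[OF assms(2)] by blast
    obtain v where "\<forall>v'. hfun z l u lam1 lam2 i v \<le> hfun z l u lam1 lam2 i v'"
      using less.IH[OF i] by blast
    then show ?thesis
      using hfun_append_minimal[OF assms(1) i P_min] by blast
  qed
qed

end

theorem lemma3p3:
  fixes z l u :: "nat \<Rightarrow> real" and lam1 lam2 :: real and n s :: nat
  assumes "lam1 > 0" and "lam2 > 0"
    and "\<forall>i\<in>{1..n}. l i \<le> 0 \<and> 0 \<le> u i"
    and "s \<in> {1..n}"
  shows "(\<exists>i<s. \<exists>a. Hval z l u lam1 lam2 s = Pfun z l u lam1 lam2 s i a
            \<and> (\<forall>i'<s. \<forall>a'. Pfun z l u lam1 lam2 s i a \<le> Pfun z l u lam1 lam2 s i' a'))
    \<and> (\<forall>i a v. i < s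
            \<longrightarrow> (\<forall>i'<s. \<forall>a'. Pfun z l u lam1 lam2 s i a \<le> Pfun z l u lam1 lam2 s i' a')
            \<longrightarrow> (\<forall>v'. hfun z l u lam1 lam2 i v \<le> hfun z l u lam1 lam2 i v')
            \<longrightarrow> (\<forall>y'. hfun z l u lam1 lam2 s (\<lambda>j. if j \<le> i then v j else a)
                      \<le> hfun z l u lam1 lam2 s y'))"
proof -
  have lam: "0 \<le> lam1" "0 \<le> lam2"
    using assms(1,2) by simp_all
  have "0 < s"
    using assms(4) by simp
  then obtain i a where i: "i < s"
    and P_min: "\<forall>i'<s. \<forall>a'. Pfun z l u lam1 lam2 s i a \<le> Pfun z l u lam1 lam2 s i' a'"
    using Pfun_attains_min[OF lam(2)] by blast
  obtain v where v_min: "\<forall>v'. hfun z l u lam1 lam2 i v \<le> hfun z l u lam1 lam2 i v'"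
    using hfun_attains_min[OF lam] by blast
  have "Hval z l u lam1 lam2 s \<le> hfun z l u lam1 lam2 s (\<lambda>j. if j \<le> i then v j else a)"
    using \<open>0 < s\<close> by (intro Hval_le_hfun) simp
  also have "\<dots> \<le> Pfun z l u lam1 lam2 s i a"
    by (rule hfun_append_le_Pfun[OF lam(1) i v_min])
  finally have "Hval z l u lam1 lam2 s = Pfun z l u lam1 lam2 s i a"
    using Pfun_min_le_Hval[OF i P_min] by (rule antisym)
  with i P_min show ?thesis
    using hfun_append_minimal[OF lam(1)] by blast
qed

end
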